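(* Let $\sigma=(\beta_l,\beta_h)$ be an arbitrary strategy, $\{\mathcal{I}_N\}$ an arbitrary sequence of instances of the binary voting game, and $\Sigma_N$ the symmetric profile in $\mathcal{I}_N$ in which every agent plays $\sigma$. Let $f=\min(f_H,f_L)$ where $f_H=P_{hH}\beta_h+P_{lH}\beta_l-\mu$ and $f_L=P_{hL}(1-\beta_h)+P_{lL}(1-\beta_l)-(1-\mu)$ (the excess expected vote share of $\Sigma_N$, which does not depend on $N$). If $f>0$ then $\lim_{N\to\infty}A(\Sigma_N)=1$; if $f\le0$ then $A(\Sigma_N)$ does not converge to $1$.
   Context: Binary voting game. An instance has $N$ agents each voting for $\mathbf{A}$ or $\mathbf{R}$. Unobserved world state $W\in\{L,H\}$ with common prior $P_L,P_H>0$. Conditional on $W$, each agent independently receives a signal $S_n\in\{l,h\}$ with $P_{sw}=\Pr[S_n=s\mid W=w]$, $P_{hH}>P_{hL}$, $P_{lH}<P_{lL}$. With threshold $\mu\in(0,1)$, $\mathbf{A}$ wins iff at least $\mu N$ agents vote $\mathbf{A}$, else $\mathbf{R}$ wins. Agents have utilities $v_n:\{L,H\}\times\{\mathbf{A},\mathbf{R}\}\to\{0,\dots,B\}$ with $v_n(H,\mathbf{A})>v_n(L,\mathbf{A})$, $v_n(H,\mathbf{R})<v_n(L,\mathbf{R})$, and are friendly, unfriendly or contingent in fixed proportions $\alpha_F<\mu$, $\alpha_U<1-\mu$, $\alpha_C$ (counts $\lfloor\alpha_FN\rfloor,\lfloor\alpha_UN\rfloor$, rest), so the informed majority decision is $\mathbf{A}$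 in $H$ and $\mathbf{R}$ in $L$. A sequence of instances: $\mathcal{I}_N$ has $N$ agents, all share $\mu$, prior, signal distribution and $\alpha$'s. Strategy $\sigma=(\beta_l,\beta_h)$, $\beta_s$ = probability of voting $\mathbf{A}$ on signal $s$. Fidelity $A(\Sigma)=P_L\lambda^{\mathbf{R}}_L(\Sigma)+P_H\lambda^{\mathbf{A}}_H(\Sigma)$, with $\lambda^{\mathbf{X}}_w(\Sigma)$ the ex-ante probability that $\mathbf{X}$ wins in state $w$. *)

theory Defs
  imports Complex_Main
begin

datatype state = L | H
datatype signal = l | h
datatype outcome = Acc | Rej

text \<open>A (possibly asymmetric) strategy profile in an instance with N agents is
  a function  prof :: nat => signal => real, where  prof n s  is the probability
  that agent n (n < N) votes Acc after receiving signal s.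
  P s w = Pr[S_n = s | W = w].\<close>

definition vote_A_prob :: "(signal \<Rightarrow> state \<Rightarrow> real) \<Rightarrow> (nat \<Rightarrow> signal \<Rightarrow> real) \<Rightarrow> state \<Rightarrow> nat \<Rightarrow> real" where
  "vote_A_prob P prof w n = P h w * prof n h + P l w * prof n l"

text \<open>Ex-ante probability that outcome X wins in state w: conditional on w the
  votes are independent; S is the set of agents voting Acc.\<close>
definition win_prob :: "nat \<Rightarrow> real \<Rightarrow> (signal \<Rightarrow> state \<Rightarrow> real) \<Rightarrow> (nat \<Rightarrow> signal \<Rightarrow> real) \<Rightarrow> outcome \<Rightarrow> state \<Rightarrow> real" where
  "win_prob N \<mu> P prof X w =
     (\<Sum>S\<in>Pow {..<N}.
        if (X = Acc \<longleftrightarrow> real (card S) \<ge> \<mu> * real N)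
        then (\<Prod>n\<in>S. vote_A_prob P prof w n) * (\<Prod>n\<in>{..<N} - S. 1 - vote_A_prob P prof w n)
        else 0)"

definition fidelity :: "nat \<Rightarrow> real \<Rightarrow> (state \<Rightarrow> real) \<Rightarrow> (signal \<Rightarrow> state \<Rightarrow> real) \<Rightarrow> (nat \<Rightarrow> signal \<Rightarrow> real) \<Rightarrow> real" where
  "fidelity N \<mu> Pr P prof = Pr L * win_prob N \<mu> P prof Rej L + Pr H * win_prob N \<mu> P prof Acc H"

definition symmetric_profile :: "real \<Rightarrow> real \<Rightarrow> nat \<Rightarrow> signal \<Rightarrow> real" where
  "symmetric_profile \<beta>l \<beta>h = (\<lambda>n s. case s of l \<Rightarrow> \<beta>l | h \<Rightarrow> \<beta>h)"

end

theory Submission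
  imports Defs
begin

text \<open>Under the symmetric profile the number of \<open>A\<close> votes in state \<open>w\<close> is binomial
  \<open>Bin(N, p\<^sub>w)\<close> with \<open>p\<^sub>H = \<mu> + f\<^sub>H\<close> and \<open>p\<^sub>L = \<mu> - f\<^sub>L\<close>.
  If both excesses are positive, Chebyshev's inequality concentrates the vote share on the correct
  side of \<open>\<mu>\<close> in both states. If, say, \<open>p\<^sub>H \<le> \<mu>\<close>, then \<open>A\<close> can win in state \<open>H\<close>
  only if the vote count is at least its mean; once the variance \<open>N p (1 - p)\<close> is at least 1, the
  second and fourth central moments force the count to fall strictly below its mean with probability
  at least \<open>9/1024\<close> (for \<open>p \<in> {0, 1}\<close> the count is deterministic). So the fidelity stays below
  \<open>1 - P\<^sub>H \<cdot> 9/1024\<close>, and symmetrically when \<open>\<mu> \<le> p\<^sub>L\<close>.\<close>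

text \<open>The expectation of \<open>g X\<close> for \<open>X \<sim> Bin(N, p)\<close>, summed over the set of successful trials
  as in \<^const>\<open>win_prob\<close>.\<close>

definition binom_expect :: "real \<Rightarrow> nat \<Rightarrow> (nat \<Rightarrow> real) \<Rightarrow> real" where
  "binom_expect p N g = (\<Sum>S\<in>Pow {..<N}. p ^ card S * (1 - p) ^ (N - card S) * g (card S))"

lemma binom_expect_0_trials [simp]: "binom_expect p 0 g = g 0"
  by (simp add: binom_expect_def)

lemma card_le_of_Pow_lessThan: "S \<in> Pow {..<N} \<Longrightarrow> card S \<le> N"
  by (metis PowD card_lessThan card_mono finite_lessThan)

lemma binom_expect_Suc:
  "binom_expect p (Suc N) g = p * binom_expect p N (\<lambda>k. g (Suc k)) + (1 - p) * binom_expect p N g"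
proof -
  define F :: "nat set \<Rightarrow> real" where "F S = p ^ card S * (1 - p) ^ (Suc N - card S) * g (card S)" for S
  have Pow_Suc: "Pow {..<Suc N} = Pow {..<N} \<union> insert N ` Pow {..<N}"
    by (simp add: lessThan_Suc Pow_insert)
  have inj: "inj_on (insert N) (Pow {..<N})"
    by (rule inj_onI) (auto simp: insert_ident)
  have "binom_expect p (Suc N) g = (\<Sum>S\<in>Pow {..<N}. F S) + (\<Sum>S\<in>Pow {..<N}. F (insert N S))"
    unfolding binom_expect_def F_def Pow_Suc
    by (subst sum.union_disjoint) (auto simp: sum.reindex[OF inj])
  also have "(\<Sum>S\<in>Pow {..<N}. F (insert N S)) = p * binom_expect p N (\<lambda>k. g (Suc k))"
    unfolding binom_expect_def sum_distrib_left
  proof (rule sum.cong)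
    fix S assume "S \<in> Pow {..<N}"
    then have "finite S" "N \<notin> S" by (auto intro: finite_subset)
    then have "card (insert N S) = Suc (card S)" by simp
    then show "F (insert N S) = p * (p ^ card S * (1 - p) ^ (N - card S) * g (Suc (card S)))"
      unfolding F_def by simp
  qed simp
  also have "(\<Sum>S\<in>Pow {..<N}. F S) = (1 - p) * binom_expect p N g"
    unfolding binom_expect_def sum_distrib_left
  proof (rule sum.cong)
    fix S assume "S \<in> Pow {..<N}"
    then have "Suc N - card S = Suc (N - card S)" by (simp add: card_le_of_Pow_lessThan Suc_diff_le)
    then show "F S = (1 - p) * (p ^ card S * (1 - p) ^ (N - card S) * g (card S))"
      unfolding F_def by simp
  qed simp
  finally show ?thesis by simp
qed

lemma binom_expect_add: "binom_expect p N (\<lambda>k. f k + g k) = binom_expect p N f + binom_expect p N g"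
  unfolding binom_expect_def by (simp add: algebra_simps sum.distrib)

lemma binom_expect_diff: "binom_expect p N (\<lambda>k. f k - g k) = binom_expect p N f - binom_expect p N g"
  unfolding binom_expect_def by (simp add: algebra_simps sum_subtractf)

lemma binom_expect_cmult: "binom_expect p N (\<lambda>k. c * f k) = c * binom_expect p N f"
  unfolding binom_expect_def by (simp add: algebra_simps sum_distrib_left)

lemma binom_expect_divide: "binom_expect p N (\<lambda>k. f k / c) = binom_expect p N f / c"
  unfolding binom_expect_def by (simp add: sum_divide_distrib)

lemma binom_expect_sum:
  "binom_expect p N (\<lambda>k. \<Sum>i\<in>I. f i k) = (\<Sum>i\<in>I. binom_expect p N (f i))"
  unfolding binom_expect_def by (simp add: sum_distrib_left sum.swap[of _ I])

lemma binom_expect_const: "binom_expect p N (\<lambda>k. c) = c"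
  by (induction N) (simp_all add: binom_expect_Suc algebra_simps)

lemma binom_expect_0: "binom_expect 0 N g = g 0"
  by (induction N) (simp_all add: binom_expect_Suc)

lemma binom_expect_1: "binom_expect 1 N g = g N"
  by (induction N arbitrary: g) (simp_all add: binom_expect_Suc)

lemma binom_expect_mono:
  assumes "0 \<le> p" "p \<le> 1" "\<And>k. k \<le> N \<Longrightarrow> f k \<le> g k"
  shows "binom_expect p N f \<le> binom_expect p N g"
  unfolding binom_expect_def
proof (rule sum_mono)
  fix S assume "S \<in> Pow {..<N}"
  then show "p ^ card S * (1 - p) ^ (N - card S) * f (card S) \<le> p ^ card S * (1 - p) ^ (N - card S) * g (card S)"
    using assms card_le_of_Pow_lessThan by (intro mult_left_mono) auto
qed

lemma binom_expect_indicator_bounds: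
  assumes "0 \<le> p" "p \<le> 1"
  shows "0 \<le> binom_expect p N (\<lambda>k. if Q k then 1 else 0)"
    and "binom_expect p N (\<lambda>k. if Q k then 1 else 0) \<le> 1"
  using binom_expect_mono[OF assms, of N "\<lambda>_. 0" "\<lambda>k. if Q k then 1 else 0"]
    binom_expect_mono[OF assms, of N "\<lambda>k. if Q k then 1 else 0" "\<lambda>_. 1"]
  by (simp_all add: binom_expect_const)

lemma binom_expect_indicator_not:
  "binom_expect p N (\<lambda>k. if \<not> Q k then 1 else 0) = 1 - binom_expect p N (\<lambda>k. if Q k then 1 else 0)"
proof -
  have "(\<lambda>k. if \<not> Q k then 1 else 0) = (\<lambda>k. 1 - (if Q k then 1 else (0::real)))" by auto
  then show ?thesis by (simp add: binom_expect_diff binom_expect_const)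
qed

definition binom_moment :: "real \<Rightarrow> nat \<Rightarrow> nat \<Rightarrow> real" where
  "binom_moment p N j = binom_expect p N (\<lambda>k. (real k - real N * p) ^ j)"

lemma binom_moment_Suc:
  "binom_moment p (Suc N) j =
     (\<Sum>i\<le>j. of_nat (j choose i) * binom_moment p N i * (p * (1 - p) ^ (j - i) + (1 - p) * (- p) ^ (j - i)))"
proof -
  have shift: "binom_expect p N (\<lambda>k. ((real k - real N * p) + c) ^ j)
      = (\<Sum>i\<le>j. of_nat (j choose i) * binom_moment p N i * c ^ (j - i))" for c
    unfolding binomial_ring binom_expect_sum binom_moment_def
    by (simp add: mult.commute mult.left_commute binom_expect_cmult)
  have "binom_moment p (Suc N) j = p * binom_expect p N (\<lambda>k. ((real k - real N * p) + (1 - p)) ^ j)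
      + (1 - p) * binom_expect p N (\<lambda>k. ((real k - real N * p) + (- p)) ^ j)"
    unfolding binom_moment_def binom_expect_Suc by (simp add: algebra_simps)
  then show ?thesis
    unfolding shift by (simp add: sum_distrib_left sum.distrib[symmetric] algebra_simps)
qed

lemma binom_moment_0: "binom_moment p N 0 = 1"
  by (simp add: binom_moment_def binom_expect_const)

lemma binom_moment_1: "binom_moment p N 1 = 0"
  by (induction N) (simp_all add: binom_moment_def[of p 0] binom_moment_Suc binom_moment_0 algebra_simps)

lemma binom_moment_2: "binom_moment p N 2 = real N * p * (1 - p)"
  by (induction N)
    (simp_all add: binom_moment_def[of p 0] binom_moment_Suc binom_moment_0 binom_moment_1
      numeral_2_eq_2 algebra_simps)

lemma binom_moment_4:
  "binom_moment p N 4 = 3 * (real N * p * (1 - p))\<^sup>2 + real N * p * (1 - p) * (1 - 6 * p * (1 - p))"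
proof (induction N)
  case (Suc N)
  txt \<open>The third moment drops out: its coefficient is \<open>p (1 - p) + (1 - p) (-p) = 0\<close>.\<close>
  have "binom_moment p (Suc N) 4 = binom_moment p N 4
      + 6 * binom_moment p N 2 * p * (1 - p) + p * (1 - p) * ((1 - p) ^ 3 + p ^ 3)"
    by (simp add: binom_moment_Suc binom_moment_0 binom_moment_1[unfolded One_nat_def] eval_nat_numeral algebra_simps)
  then show ?case
    unfolding Suc.IH binom_moment_2 by (simp add: power2_eq_square power3_eq_cube algebra_simps)
qed (simp add: binom_moment_def)

lemma sq_le_abs_plus_fourth:
  fixes y t :: real
  assumes "t > 0"
  shows "y\<^sup>2 \<le> t * \<bar>y\<bar> + y ^ 4 / t\<^sup>2"
proof (cases "\<bar>y\<bar> \<le> t")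
  case True
  then have "y\<^sup>2 \<le> t * \<bar>y\<bar>"
    by (metis abs_ge_zero mult_right_mono power2_abs power2_eq_square)
  then show ?thesis by (simp add: add_increasing2)
next
  case False
  then have "t\<^sup>2 * y\<^sup>2 \<le> y\<^sup>2 * y\<^sup>2"
    by (metis abs_ge_zero assms less_eq_real_def linorder_not_le mult_right_mono power2_abs power_mono zero_le_power2)
  then have "y\<^sup>2 \<le> y ^ 4 / t\<^sup>2"
    using assms by (simp add: pos_le_divide_eq mult.commute flip: power_add)
  then show ?thesis using assms by (simp add: add_increasing)
qed

lemma pos_part_le_indicator_plus_sq:
  fixes y u :: real
  assumes "u > 0"
  shows "max y 0 \<le> u * (if y > 0 then 1 else 0) + y\<^sup>2 / (4 * u)"
proof (cases "y > 0")
  case True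
  have "y * (4 * u) \<le> u * (4 * u) + y\<^sup>2"
    using zero_le_power2[of "y - 2 * u"] by (simp add: power2_eq_square algebra_simps)
  then show ?thesis using True assms by (simp add: field_simps)
qed (use assms in simp)

text \<open>A Paley-Zygmund type argument: \<open>y\<^sup>2 \<le> t \<bar>y\<bar> + y\<^sup>4 / t\<^sup>2\<close> with \<open>t = 4 \<sigma>\<close> gives
  \<open>E \<bar>Z\<bar> \<ge> 3 \<sigma> / 16\<close>; since \<open>E Z = 0\<close> the positive part carries half of it, and
  \<open>max y 0 \<le> u [y > 0] + y\<^sup>2 / (4 u)\<close> with \<open>u = 16 \<sigma> / 3\<close> turns this into the bound.\<close>

lemma binom_prob_pos_ge_of_moments:
  fixes Z :: "nat \<Rightarrow> real"
  assumes p: "0 \<le> p" "p \<le> 1"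
    and mean: "binom_expect p N Z = 0"
    and var: "binom_expect p N (\<lambda>k. (Z k)\<^sup>2) = s" and "s > 0"
    and fourth: "binom_expect p N (\<lambda>k. Z k ^ 4) \<le> 4 * s\<^sup>2"
  shows "9 / 1024 \<le> binom_expect p N (\<lambda>k. if Z k > 0 then 1 else 0)"
proof -
  define \<sigma> where "\<sigma> = sqrt s"
  have "\<sigma> > 0" and s: "s = \<sigma>\<^sup>2" using \<open>s > 0\<close> by (simp_all add: \<sigma>_def)
  let ?E = "binom_expect p N"
  have "s \<le> ?E (\<lambda>k. 4 * \<sigma> * \<bar>Z k\<bar> + Z k ^ 4 / (4 * \<sigma>)\<^sup>2)"
    unfolding var[symmetric] using \<open>\<sigma> > 0\<close> by (intro binom_expect_mono p sq_le_abs_plus_fourth) simp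
  also have "\<dots> \<le> 4 * \<sigma> * ?E (\<lambda>k. \<bar>Z k\<bar>) + s / 4"
    using fourth \<open>\<sigma> > 0\<close> unfolding binom_expect_add binom_expect_cmult binom_expect_divide s
    by (simp add: field_simps power2_eq_square)
  finally have abs_ge: "3 * \<sigma> / 16 \<le> ?E (\<lambda>k. \<bar>Z k\<bar>)"
    using \<open>\<sigma> > 0\<close> unfolding s by (simp add: power2_eq_square field_simps)
  have "?E (\<lambda>k. \<bar>Z k\<bar>) = 2 * ?E (\<lambda>k. max (Z k) 0)"
  proof -
    have "(\<lambda>k. \<bar>Z k\<bar>) = (\<lambda>k. 2 * max (Z k) 0 - Z k)" by auto
    then show ?thesis using mean by (simp add: binom_expect_diff binom_expect_cmult)
  qed
  also have "?E (\<lambda>k. max (Z k) 0)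
      \<le> 16 * \<sigma> / 3 * ?E (\<lambda>k. if Z k > 0 then 1 else 0) + 3 * \<sigma> / 64"
  proof -
    have "?E (\<lambda>k. max (Z k) 0)
        \<le> ?E (\<lambda>k. 16 * \<sigma> / 3 * (if Z k > 0 then 1 else 0) + (Z k)\<^sup>2 / (4 * (16 * \<sigma> / 3)))"
      using \<open>\<sigma> > 0\<close> by (intro binom_expect_mono p pos_part_le_indicator_plus_sq) simp
    then show ?thesis
      using \<open>\<sigma> > 0\<close> unfolding binom_expect_add binom_expect_cmult binom_expect_divide var s
      by (simp add: power2_eq_square)
  qed
  finally have "\<sigma> * (9 / 1024) \<le> \<sigma> * ?E (\<lambda>k. if Z k > 0 then 1 else 0)"
    using abs_ge by (simp add: field_simps)
  then show ?thesis
    using \<open>\<sigma> > 0\<close> by (simp add: mult_le_cancel_left_pos)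
qed

lemma binom_anticoncentration:
  assumes p: "0 \<le> p" "p \<le> 1" and var: "1 \<le> real N * p * (1 - p)"
  shows "9 / 1024 \<le> binom_expect p N (\<lambda>k. if real k < real N * p then 1 else 0)"
    and "9 / 1024 \<le> binom_expect p N (\<lambda>k. if real N * p < real k then 1 else 0)"
proof -
  define s where "s = real N * p * (1 - p)"
  have "1 \<le> s" using var s_def by simp
  have "binom_moment p N 4 \<le> 4 * s\<^sup>2"
  proof -
    have "binom_moment p N 4 \<le> 3 * s\<^sup>2 + s"
      unfolding binom_moment_4 s_def[symmetric] using p var s_def by (simp add: mult_left_le)
    also have "\<dots> \<le> 4 * s\<^sup>2" using \<open>1 \<le> s\<close> by (simp add: power2_eq_square)
    finally show ?thesis .
  qed
  then have fourth: "binom_expect p N (\<lambda>k. (\<epsilon> * (real k - real N * p)) ^ 4) \<le> 4 * s\<^sup>2"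
    if "\<bar>\<epsilon>\<bar> = 1" for \<epsilon> :: real
    using that by (auto simp: binom_moment_def power_mult_distrib abs_if split: if_splits)
  have mean: "binom_expect p N (\<lambda>k. \<epsilon> * (real k - real N * p)) = 0" for \<epsilon>
    using binom_moment_1[of p N] by (simp add: binom_moment_def binom_expect_cmult)
  have second: "binom_expect p N (\<lambda>k. (\<epsilon> * (real k - real N * p))\<^sup>2) = s"
    if "\<bar>\<epsilon>\<bar> = 1" for \<epsilon> :: real
    using that binom_moment_2[of p N] unfolding s_def
    by (auto simp: binom_moment_def power_mult_distrib abs_if split: if_splits)
  have "s > 0" using \<open>1 \<le> s\<close> by simp
  show "9 / 1024 \<le> binom_expect p N (\<lambda>k. if real k < real N * p then 1 else 0)"
    using binom_prob_pos_ge_of_moments[OF p mean second \<open>s > 0\<close> fourth, of "-1"] by simp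
  show "9 / 1024 \<le> binom_expect p N (\<lambda>k. if real N * p < real k then 1 else 0)"
    using binom_prob_pos_ge_of_moments[OF p mean second \<open>s > 0\<close> fourth, of 1] by simp
qed

definition binom_deviation_prob :: "real \<Rightarrow> nat \<Rightarrow> real \<Rightarrow> real" where
  "binom_deviation_prob p N c = binom_expect p N (\<lambda>k. if c \<le> \<bar>real k - real N * p\<bar> then 1 else 0)"

lemma binom_chebyshev:
  assumes p: "0 \<le> p" "p \<le> 1" and "c > 0"
  shows "binom_deviation_prob p N c \<le> real N * p * (1 - p) / c\<^sup>2"
proof -
  have "binom_deviation_prob p N c \<le> binom_expect p N (\<lambda>k. (real k - real N * p)\<^sup>2 / c\<^sup>2)"
    unfolding binom_deviation_prob_def
  proof (rule binom_expect_mono[OF p])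
    fix k
    have "c\<^sup>2 \<le> (real k - real N * p)\<^sup>2" if "c \<le> \<bar>real k - real N * p\<bar>"
      using that \<open>c > 0\<close> by (metis less_le power2_abs power_mono)
    then show "(if c \<le> \<bar>real k - real N * p\<bar> then 1 else 0) \<le> (real k - real N * p)\<^sup>2 / c\<^sup>2"
      using \<open>c > 0\<close> by simp
  qed
  then show ?thesis
    using binom_moment_2[of p N] by (simp add: binom_moment_def binom_expect_divide)
qed

lemma tendsto_binom_deviation_prob_0:
  assumes p: "0 \<le> p" "p \<le> 1" and "d > 0"
  shows "(\<lambda>N. binom_deviation_prob p N (d * real N)) \<longlonglongrightarrow> 0"
proof (rule tendsto_sandwich[OF _ _ tendsto_const lim_const_over_n])
  show "\<forall>\<^sub>F N in sequentially. 0 \<le> binom_deviation_prob p N (d * real N)"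
    unfolding binom_deviation_prob_def using binom_expect_indicator_bounds(1)[OF p] by simp
  show "\<forall>\<^sub>F N in sequentially. binom_deviation_prob p N (d * real N) \<le> p * (1 - p) / d\<^sup>2 / real N"
    using eventually_gt_at_top[of 0]
  proof eventually_elim
    case (elim N)
    then show ?case
      using binom_chebyshev[OF p, of "d * real N" N] \<open>d > 0\<close> by (simp add: power2_eq_square)
  qed
qed

lemma eventually_binom_variance_ge_1:
  assumes "0 < p" "p < 1"
  shows "\<forall>\<^sub>F N in sequentially. 1 \<le> real N * p * (1 - p)"
proof -
  have "filterlim (\<lambda>N. real N * (p * (1 - p))) at_top sequentially"
    using assms by (intro filterlim_at_top_mult_tendsto_pos[OF tendsto_const] filterlim_real_sequentially) simp
  then show ?thesis by (simp add: filterlim_at_top mult.assoc)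
qed

definition binom_upper_tail :: "real \<Rightarrow> nat \<Rightarrow> real \<Rightarrow> real" where
  "binom_upper_tail p N t = binom_expect p N (\<lambda>k. if t \<le> real k then 1 else 0)"

lemma binom_upper_tail_bounds:
  assumes "0 \<le> p" "p \<le> 1"
  shows "0 \<le> binom_upper_tail p N t" "binom_upper_tail p N t \<le> 1"
  unfolding binom_upper_tail_def using binom_expect_indicator_bounds[OF assms] by auto

lemma tendsto_binom_upper_tail_0:
  assumes "0 \<le> p" "p \<le> 1" "p < \<mu>"
  shows "(\<lambda>N. binom_upper_tail p N (\<mu> * real N)) \<longlonglongrightarrow> 0"
proof (rule tendsto_sandwich[OF _ _ tendsto_const tendsto_binom_deviation_prob_0])
  show p: "0 \<le> p" "p \<le> 1" "\<mu> - p > 0"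
    using assms by auto
  show "\<forall>\<^sub>F N in sequentially. 0 \<le> binom_upper_tail p N (\<mu> * real N)"
    using binom_upper_tail_bounds[OF p(1,2)] by simp
  show "\<forall>\<^sub>F N in sequentially. binom_upper_tail p N (\<mu> * real N)
      \<le> binom_deviation_prob p N ((\<mu> - p) * real N)"
    unfolding binom_upper_tail_def binom_deviation_prob_def
    by (intro always_eventually allI binom_expect_mono[OF p(1,2)]) (auto simp: algebra_simps abs_if)
qed

lemma tendsto_binom_upper_tail_1:
  assumes "0 \<le> p" "p \<le> 1" "\<mu> < p"
  shows "(\<lambda>N. binom_upper_tail p N (\<mu> * real N)) \<longlonglongrightarrow> 1"
proof -
  have p: "0 \<le> p" "p \<le> 1" "p - \<mu> > 0"
    using assms by auto
  have "\<forall>\<^sub>F N in sequentially.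
      1 - binom_upper_tail p N (\<mu> * real N) \<le> binom_deviation_prob p N ((p - \<mu>) * real N)"
    unfolding binom_upper_tail_def binom_deviation_prob_def binom_expect_indicator_not[symmetric]
    by (intro always_eventually allI binom_expect_mono[OF p(1,2)]) (auto simp: algebra_simps abs_if)
  then have "(\<lambda>N. 1 - binom_upper_tail p N (\<mu> * real N)) \<longlonglongrightarrow> 0"
    using binom_upper_tail_bounds[OF p(1,2)]
    by (intro tendsto_sandwich[OF _ _ tendsto_const tendsto_binom_deviation_prob_0[OF p]]) simp_all
  then have "(\<lambda>N. 1 - (1 - binom_upper_tail p N (\<mu> * real N))) \<longlonglongrightarrow> 1 - 0"
    by (intro tendsto_diff tendsto_const)
  then show ?thesis by simp
qed

lemma eventually_binom_upper_tail_le: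
  assumes "0 \<le> p" "p \<le> \<mu>" "0 < \<mu>" "\<mu> < 1"
  shows "\<forall>\<^sub>F N in sequentially. binom_upper_tail p N (\<mu> * real N) \<le> 1 - 9 / 1024"
proof (cases "p = 0")
  case True
  show ?thesis
    using eventually_gt_at_top[of 0]
  proof eventually_elim
    case (elim N)
    then have "0 < \<mu> * real N" using \<open>0 < \<mu>\<close> by simp
    then show ?case by (simp add: binom_upper_tail_def True binom_expect_0)
  qed
next
  case False
  with assms have p: "0 \<le> p" "p \<le> 1" and "0 < p" "p < 1" by auto
  show ?thesis
    using eventually_binom_variance_ge_1[OF \<open>0 < p\<close> \<open>p < 1\<close>]
  proof eventually_elim
    case (elim N)
    have "real N * p \<le> \<mu> * real N"
      using assms by (simp add: mult.commute mult_right_mono)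
    then have "binom_upper_tail p N (\<mu> * real N)
        \<le> binom_expect p N (\<lambda>k. if \<not> real k < real N * p then 1 else 0)"
      unfolding binom_upper_tail_def by (intro binom_expect_mono[OF p]) auto
    then show ?case
      using binom_anticoncentration(1)[OF p elim] by (simp add: binom_expect_indicator_not)
  qed
qed

lemma eventually_binom_upper_tail_ge:
  assumes "\<mu> \<le> p" "p \<le> 1" "0 < \<mu>" "\<mu> < 1"
  shows "\<forall>\<^sub>F N in sequentially. 9 / 1024 \<le> binom_upper_tail p N (\<mu> * real N)"
proof (cases "p = 1")
  case True
  show ?thesis
    using \<open>0 < \<mu>\<close> \<open>\<mu> < 1\<close> by (simp add: binom_upper_tail_def True binom_expect_1 mult_left_le_one_le)
next
  case False
  with assms have p: "0 \<le> p" "p \<le> 1" and "0 < p" "p < 1" by auto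
  show ?thesis
    using eventually_binom_variance_ge_1[OF \<open>0 < p\<close> \<open>p < 1\<close>]
  proof eventually_elim
    case (elim N)
    have "\<mu> * real N \<le> real N * p"
      using assms by (simp add: mult.commute mult_right_mono)
    then have "binom_expect p N (\<lambda>k. if real N * p < real k then 1 else 0) \<le> binom_upper_tail p N (\<mu> * real N)"
      unfolding binom_upper_tail_def by (intro binom_expect_mono[OF p]) auto
    then show ?case
      using binom_anticoncentration(2)[OF p elim] by simp
  qed
qed

lemma win_prob_eq_binom_expect:
  assumes "\<And>n. n < N \<Longrightarrow> vote_A_prob P prof w n = q"
  shows "win_prob N \<mu> P prof X w
    = binom_expect q N (\<lambda>k. if X = Acc \<longleftrightarrow> \<mu> * real N \<le> real k then 1 else 0)"
  unfolding win_prob_def binom_expect_def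
proof (intro sum.cong refl)
  fix S assume "S \<in> Pow {..<N}"
  then have S: "finite S" "S \<subseteq> {..<N}" by (auto intro: finite_subset)
  then have "(\<Prod>n\<in>S. vote_A_prob P prof w n) = q ^ card S"
    and "(\<Prod>n\<in>{..<N} - S. 1 - vote_A_prob P prof w n) = (1 - q) ^ (N - card S)"
    using assms by (simp_all add: subset_eq card_Diff_subset)
  then show "(if X = Acc \<longleftrightarrow> real (card S) \<ge> \<mu> * real N
        then (\<Prod>n\<in>S. vote_A_prob P prof w n) * (\<Prod>n\<in>{..<N} - S. 1 - vote_A_prob P prof w n) else 0)
      = q ^ card S * (1 - q) ^ (N - card S) * (if X = Acc \<longleftrightarrow> \<mu> * real N \<le> real (card S) then 1 else 0)"
    by simp
qed

lemma fidelity_symmetric_profile: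
  "fidelity N \<mu> Pr P (symmetric_profile \<beta>l \<beta>h) =
     Pr L * (1 - binom_upper_tail (P h L * \<beta>h + P l L * \<beta>l) N (\<mu> * real N))
     + Pr H * binom_upper_tail (P h H * \<beta>h + P l H * \<beta>l) N (\<mu> * real N)"
proof -
  have vote: "vote_A_prob P (symmetric_profile \<beta>l \<beta>h) w n = P h w * \<beta>h + P l w * \<beta>l" for w n
    by (simp add: vote_A_prob_def symmetric_profile_def)
  show ?thesis
    unfolding fidelity_def win_prob_eq_binom_expect[OF vote] binom_upper_tail_def
    by (simp add: binom_expect_indicator_not)
qed

lemma symmetric_vote_prob_bounds:
  fixes P :: "signal \<Rightarrow> state \<Rightarrow> real"
  assumes "P l w \<ge> 0" "P h w \<ge> 0" "P l w + P h w = 1"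
    and "0 \<le> \<beta>l" "\<beta>l \<le> 1" "0 \<le> \<beta>h" "\<beta>h \<le> 1"
  shows "0 \<le> P h w * \<beta>h + P l w * \<beta>l" "P h w * \<beta>h + P l w * \<beta>l \<le> 1"
  using assms convex_bound_le[of \<beta>h 1 \<beta>l "P h w" "P l w"] by (simp_all add: add.commute)

lemma tendsto_fidelity_symmetric_profile:
  fixes P :: "signal \<Rightarrow> state \<Rightarrow> real" and \<beta>l \<beta>h :: real
  defines "pL \<equiv> P h L * \<beta>h + P l L * \<beta>l" and "pH \<equiv> P h H * \<beta>h + P l H * \<beta>l"
  assumes prior: "Pr L + Pr H = 1" and order: "0 \<le> pL" "pL < \<mu>" "\<mu> < pH" "pH \<le> 1"
  shows "(\<lambda>N. fidelity N \<mu> Pr P (symmetric_profile \<beta>l \<beta>h)) \<longlonglongrightarrow> 1"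
proof -
  have "(\<lambda>N. binom_upper_tail pL N (\<mu> * real N)) \<longlonglongrightarrow> 0"
    using order by (intro tendsto_binom_upper_tail_0) auto
  moreover have "(\<lambda>N. binom_upper_tail pH N (\<mu> * real N)) \<longlonglongrightarrow> 1"
    using order by (intro tendsto_binom_upper_tail_1) auto
  ultimately have "(\<lambda>N. Pr L * (1 - binom_upper_tail pL N (\<mu> * real N)) + Pr H * binom_upper_tail pH N (\<mu> * real N))
      \<longlonglongrightarrow> Pr L * (1 - 0) + Pr H * 1"
    by (intro tendsto_intros)
  then show ?thesis
    using prior by (simp add: fidelity_symmetric_profile pL_def pH_def)
qed

lemma not_tendsto_fidelity_symmetric_profile:
  fixes P :: "signal \<Rightarrow> state \<Rightarrow> real" and \<beta>l \<beta>h :: real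
  defines "pL \<equiv> P h L * \<beta>h + P l L * \<beta>l" and "pH \<equiv> P h H * \<beta>h + P l H * \<beta>l"
  assumes prior: "Pr L > 0" "Pr H > 0" "Pr L + Pr H = 1" and mu: "0 < \<mu>" "\<mu> < 1"
    and pL: "0 \<le> pL" "pL \<le> 1" and pH: "0 \<le> pH" "pH \<le> 1"
    and "pH \<le> \<mu> \<or> \<mu> \<le> pL"
  shows "\<not> (\<lambda>N. fidelity N \<mu> Pr P (symmetric_profile \<beta>l \<beta>h)) \<longlonglongrightarrow> 1"
proof
  let ?tL = "\<lambda>N. binom_upper_tail pL N (\<mu> * real N)"
  let ?tH = "\<lambda>N. binom_upper_tail pH N (\<mu> * real N)"
  assume "(\<lambda>N. fidelity N \<mu> Pr P (symmetric_profile \<beta>l \<beta>h)) \<longlonglongrightarrow> 1"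
  then have lim: "(\<lambda>N. Pr L * (1 - ?tL N) + Pr H * ?tH N) \<longlonglongrightarrow> 1"
    by (simp add: fidelity_symmetric_profile pL_def pH_def)
  obtain e where "e > 0" and "\<forall>\<^sub>F N in sequentially. Pr L * (1 - ?tL N) + Pr H * ?tH N \<le> 1 - e"
    using \<open>pH \<le> \<mu> \<or> \<mu> \<le> pL\<close>
  proof
    assume "pH \<le> \<mu>"
    have "\<forall>\<^sub>F N in sequentially. Pr L * (1 - ?tL N) + Pr H * ?tH N \<le> 1 - Pr H * (9 / 1024)"
      using eventually_binom_upper_tail_le[OF pH(1) \<open>pH \<le> \<mu>\<close> mu]
    proof eventually_elim
      case (elim N)
      have "Pr L * (1 - ?tL N) \<le> Pr L"
        using binom_upper_tail_bounds(1)[OF pL] prior(1) by (simp add: mult_left_le)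
      moreover have "Pr H * ?tH N \<le> Pr H * (1 - 9 / 1024)"
        using elim prior(2) by simp
      ultimately show ?case
        using prior(3) by (simp add: algebra_simps)
    qed
    then show ?thesis
      using that[of "Pr H * (9 / 1024)"] prior(2) by simp
  next
    assume "\<mu> \<le> pL"
    have "\<forall>\<^sub>F N in sequentially. Pr L * (1 - ?tL N) + Pr H * ?tH N \<le> 1 - Pr L * (9 / 1024)"
      using eventually_binom_upper_tail_ge[OF \<open>\<mu> \<le> pL\<close> pL(2) mu]
    proof eventually_elim
      case (elim N)
      have "Pr H * ?tH N \<le> Pr H"
        using binom_upper_tail_bounds(2)[OF pH] prior(2) by (simp add: mult_left_le)
      moreover have "Pr L * (1 - ?tL N) \<le> Pr L * (1 - 9 / 1024)"
        using elim prior(1) by simp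
      ultimately show ?case
        using prior(3) by (simp add: algebra_simps)
    qed
    then show ?thesis
      using that[of "Pr L * (9 / 1024)"] prior(1) by simp
  qed
  with tendsto_upperbound[OF lim] show False
    by fastforce
qed

theorem corollary2:
  fixes Pr :: "state \<Rightarrow> real" and P :: "signal \<Rightarrow> state \<Rightarrow> real"
    and \<mu> \<beta>l \<beta>h :: real
  assumes prior: "Pr L > 0" "Pr H > 0" "Pr L + Pr H = 1"
    and sig: "\<And>s w. P s w \<ge> 0" "\<And>w. P l w + P h w = 1"
    and sigH: "P h H > P h L" "P l H < P l L"
    and mu: "0 < \<mu>" "\<mu> < 1"
    and beta: "0 \<le> \<beta>l" "\<beta>l \<le> 1" "0 \<le> \<beta>h" "\<beta>h \<le> 1"
  defines "fH \<equiv> P h H * \<beta>h + P l H * \<beta>l - \<mu>"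
    and "fL \<equiv> P h L * (1 - \<beta>h) + P l L * (1 - \<beta>l) - (1 - \<mu>)"
    and "A \<equiv> (\<lambda>N. fidelity N \<mu> Pr P (symmetric_profile \<beta>l \<beta>h))"
  shows "(min fH fL > 0 \<longrightarrow> A \<longlonglongrightarrow> 1) \<and> (min fH fL \<le> 0 \<longrightarrow> \<not> (A \<longlonglongrightarrow> 1))"
proof -
  define pL where "pL = P h L * \<beta>h + P l L * \<beta>l"
  define pH where "pH = P h H * \<beta>h + P l H * \<beta>l"
  have pL: "0 \<le> pL" "pL \<le> 1" and pH: "0 \<le> pH" "pH \<le> 1"
    unfolding pL_def pH_def
    using symmetric_vote_prob_bounds[of P L \<beta>l \<beta>h] symmetric_vote_prob_bounds[of P H \<beta>l \<beta>h] sig beta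
    by auto
  have "fH = pH - \<mu>" "fL = \<mu> - pL"
    using sig(2)[of L] by (simp_all add: fH_def fL_def pH_def pL_def algebra_simps)
  moreover note tendsto_fidelity_symmetric_profile[where P = P and \<beta>l = \<beta>l and \<beta>h = \<beta>h, folded pL_def pH_def]
    not_tendsto_fidelity_symmetric_profile[where P = P and \<beta>l = \<beta>l and \<beta>h = \<beta>h, folded pL_def pH_def]
  ultimately show ?thesis
    using prior mu pL pH unfolding A_def by (auto simp: min_le_iff_disj)
qed

end
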